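(* For every $m\ge 1$ we have \[ \tau_a(D_{0,m}) \equiv \sum_{k=1}^m \binom{m-1}{k-1} a^{m-k} D_{0,k} \] modulo a central element of $Y(\widehat{\mathfrak{gl}}(1))$.
   Context: Let $\hbar,\mathbf t$ be indeterminates. Set $G_0(x)=-\log x$, $G_n(x)=\frac{x^{-n}-1}{n}$ for $n\ge1$, and $\varphi_n(x)=\sum_{q\in\{-\hbar,\ \hbar+\mathbf t,\ -\mathbf t\}} x^n\big(G_n(1-qx)-G_n(1+qx)\big)$. The affine Yangian $Y(\widehat{\mathfrak{gl}}(1))$ is the $\mathbb C[\omega,\hbar,\mathbf t]$-algebra generated by $D_{0,m}$ ($m\ge1$), $e_n,f_n$ ($n\ge0$) with relations: $[D_{0,m},D_{0,n}]=0$; $[D_{0,m},e_n]=-\hbar e_{m+n-1}$; $[D_{0,m},f_n]=\hbar f_{m+n-1}$; $3[e_2,e_1]-[e_3,e_0]+(\hbar^2+\mathbf t(\hbar+\mathbf t))[e_1,e_0]+\hbar\mathbf t(\hbar+\mathbf t)e_0^2=0$; $3[f_2,f_1]-[f_3,f_0]+(\hbar^2+\mathbf t(\hbar+\mathbf t))[f_1,f_0]-\hbar\mathbf t(\hbar+\mathbf t)f_0^2=0$; $[e_0,[e_0,e_1]]=0=[f_0,[f_0,f_1]]$; $[e_m,f_n]=\hbar h_{m+n}$, where the elements $h_n$ are determined by \[ 1-\mathbf t(\hbar+\mathbf t)\sum_{n\ge0}h_nx^{n+1}=\frac{(1-(\hbar+\mathbf t)x)(1+\omega\mathbf t x)}{1-(\hbar+(1-\omega)\mathbf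 t)x}\exp\Big(-\sum_{n\ge0}\frac{D_{0,n+1}}{\hbar}\varphi_n(x)\Big). \] For a complex number $a$, $\tau_a$ is the automorphism of $Y(\widehat{\mathfrak{gl}}(1))$ defined by $\tau_a(e_n)=\sum_{k=0}^n\binom{n}{k}a^{n-k}e_k$, $\tau_a(f_n)=\sum_{k=0}^n\binom{n}{k}a^{n-k}f_k$, $\tau_a(h_n)=\sum_{k=0}^n\binom{n}{k}a^{n-k}h_k$. *)

theory Defs
  imports Complex_Main "HOL-Library.Poly_Mapping"
    "HOL-Computational_Algebra.Formal_Power_Series"
begin

type_synonym R = "(nat \<Rightarrow>\<^sub>0 nat) \<Rightarrow>\<^sub>0 complex"

definition rconst :: "complex \<Rightarrow> R" where
  "rconst c = Poly_Mapping.single 0 c"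

definition rvar :: "nat \<Rightarrow> R" where
  "rvar i = Poly_Mapping.single (Poly_Mapping.single i 1) 1"

definition om :: R where "om = rvar 0"
definition hb :: R where "hb = rvar 1"
definition tt :: R where "tt = rvar 2"

definition rdiv :: "R \<Rightarrow> R \<Rightarrow> R" where
  "rdiv p q = (THE r. r * q = p)"

text \<open>Generators: DG k stands for D_{0,k+1} (so only D_{0,m}, m >= 1, occur),
  EG n for e_n, FG n for f_n.\<close>
datatype gen = DG nat | EG nat | FG nat

datatype word = Word "gen list"

instantiation word :: monoid_add
begin
fun plus_word :: "word \<Rightarrow> word \<Rightarrow> word" where
  "plus_word (Word u) (Word v) = Word (u @ v)"
definition zero_word :: word where "zero_word = Word []"
instance
proof
  fix a b c :: word
  show "a + b + c = a + (b + c)" by (cases a; cases b; cases c) auto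
  show "0 + a = a" by (cases a) (auto simp: zero_word_def)
  show "a + 0 = a" by (cases a) (auto simp: zero_word_def)
qed
end

text \<open>Elements of the free algebra: finitely supported R-linear combinations of words,
  with multiplication induced by concatenation (noncommutative).\<close>
type_synonym FA = "word \<Rightarrow>\<^sub>0 R"

definition sc :: "R \<Rightarrow> FA" where
  "sc r = Poly_Mapping.single 0 r"

definition gn :: "gen \<Rightarrow> FA" where
  "gn g = Poly_Mapping.single (Word [g]) 1"

definition D0 :: "nat \<Rightarrow> FA" where
  "D0 m = gn (DG (m - 1))"
definition ee :: "nat \<Rightarrow> FA" where "ee n = gn (EG n)"
definition ff :: "nat \<Rightarrow> FA" where "ff n = gn (FG n)"

definition comm :: "FA \<Rightarrow> FA \<Rightarrow> FA" where
  "comm x y = x * y - y * x"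

text \<open>Coefficient of x^j in G_n(1 - u x), where G_0(y) = -log y and
  G_n(y) = (y^{-n} - 1)/n; i.e. -log(1-ux) = sum_{j>=1} u^j x^j / j and
  (1-ux)^{-n} = sum_j binom(n+j-1,j) u^j x^j.\<close>
definition gcoef :: "nat \<Rightarrow> R \<Rightarrow> nat \<Rightarrow> R" where
  "gcoef n u j =
     (if j = 0 then 0
      else if n = 0 then rconst (1 / of_nat j) * u ^ j
      else rconst (of_nat ((n + j - 1) choose j) / of_nat n) * u ^ j)"

text \<open>Coefficient of x^k in phi_n(x) = sum_q x^n (G_n(1-qx) - G_n(1+qx)),
  q ranging over -hbar, hbar+t, -t.\<close>
definition phic :: "nat \<Rightarrow> nat \<Rightarrow> R" where
  "phic n k = sum_list (map (\<lambda>q. if n \<le> k then gcoef n q (k - n) - gcoef n (- q) (k - n) else 0)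
                          [- hb, hb + tt, - tt])"

text \<open>The series S(x) = - sum_{n>=0} (D_{0,n+1}/hbar) phi_n(x) (phi_n(x) = O(x^{n+1})).\<close>
definition Sser :: "FA fps" where
  "Sser = Abs_fps (\<lambda>k. - (\<Sum>n\<le>k. sc (rdiv (phic n k) hb) * D0 (n + 1)))"

text \<open>Coefficients of exp(S(x)) = sum_j S(x)^j / j!.\<close>
definition Ec :: "nat \<Rightarrow> FA" where
  "Ec N = (\<Sum>j\<le>N. sc (rconst (1 / fact j)) * fps_nth (Sser ^ j) N)"

text \<open>Coefficients of (1-(hbar+t)x)(1+omega t x)/(1-(hbar+(1-omega)t)x).\<close>
definition numc :: "nat \<Rightarrow> R" where
  "numc i = (if i = 0 then 1 else if i = 1 then - (hb + tt) + om * tt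
             else if i = 2 then - ((hb + tt) * (om * tt)) else 0)"

definition Pc :: "nat \<Rightarrow> R" where
  "Pc i = (\<Sum>k\<le>i. numc k * (hb + (1 - om) * tt) ^ (i - k))"

definition RHSc :: "nat \<Rightarrow> FA" where
  "RHSc N = (\<Sum>i\<le>N. sc (Pc i) * Ec (N - i))"

text \<open>h_n determined by comparing coefficients of x^{n+1}:
  - t(hbar+t) h_n = [x^{n+1}] RHS.\<close>
definition hh :: "nat \<Rightarrow> FA" where
  "hh n = (THE y. sc (tt * (hb + tt)) * y = - RHSc (n + 1))"

definition rels :: "FA set" where
  "rels =
     {comm (D0 m) (D0 n) | m n. 1 \<le> m \<and> 1 \<le> n}
   \<union> {comm (D0 m) (ee n) + sc hb * ee (m + n - 1) | m n. 1 \<le> m}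
   \<union> {comm (D0 m) (ff n) - sc hb * ff (m + n - 1) | m n. 1 \<le> m}
   \<union> {sc 3 * comm (ee 2) (ee 1) - comm (ee 3) (ee 0)
        + sc (hb ^ 2 + tt * (hb + tt)) * comm (ee 1) (ee 0)
        + sc (hb * tt * (hb + tt)) * ee 0 ^ 2}
   \<union> {sc 3 * comm (ff 2) (ff 1) - comm (ff 3) (ff 0)
        + sc (hb ^ 2 + tt * (hb + tt)) * comm (ff 1) (ff 0)
        - sc (hb * tt * (hb + tt)) * ff 0 ^ 2}
   \<union> {comm (ee 0) (comm (ee 0) (ee 1)), comm (ff 0) (comm (ff 0) (ff 1))}
   \<union> {comm (ee m) (ff n) - sc hb * hh (m + n) | m n. True}"

definition two_sided_ideal :: "FA set \<Rightarrow> bool" where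
  "two_sided_ideal I \<longleftrightarrow> 0 \<in> I \<and> (\<forall>x\<in>I. \<forall>y\<in>I. x + y \<in> I) \<and> (\<forall>x\<in>I. - x \<in> I)
     \<and> (\<forall>x\<in>I. \<forall>a. a * x \<in> I \<and> x * a \<in> I)"

text \<open>Y(gl1^) = FA / Yid.\<close>
definition Yid :: "FA set" where
  "Yid = \<Inter>{I. two_sided_ideal I \<and> rels \<subseteq> I}"

definition Ycentral :: "FA \<Rightarrow> bool" where
  "Ycentral z \<longleftrightarrow> (\<forall>y. z * y - y * z \<in> Yid)"

text \<open>tau : FA -> FA is a lift of an R-algebra automorphism of Y
  (every R-algebra endomorphism of Y lifts to FA since FA is free).\<close>
definition Y_automorphism_lift :: "(FA \<Rightarrow> FA) \<Rightarrow> bool" where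
  "Y_automorphism_lift \<tau> \<longleftrightarrow>
     (\<forall>x y. \<tau> (x + y) = \<tau> x + \<tau> y) \<and> (\<forall>x y. \<tau> (x * y) = \<tau> x * \<tau> y)
     \<and> (\<forall>r. \<tau> (sc r) = sc r)
     \<and> (\<forall>x\<in>Yid. \<tau> x \<in> Yid)
     \<and> (\<forall>x. \<tau> x \<in> Yid \<longrightarrow> x \<in> Yid)
     \<and> (\<forall>y. \<exists>x. \<tau> x - y \<in> Yid)"

definition cst :: "complex \<Rightarrow> FA" where
  "cst a = sc (rconst a)"

end

theory Submission
  imports Defs
begin

text \<open>
  Put \<open>z = \<tau>(D\<^sub>0\<^sub>,\<^sub>m) - \<Sum>\<^sub>k binom(m-1,k-1) a\<^sup>m\<^sup>-\<^sup>k D\<^sub>0\<^sub>,\<^sub>k\<close>; it suffices that \<open>z\<close> commutes with every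
  generator modulo the defining ideal. For \<open>e\<^sub>n\<close> and \<open>f\<^sub>n\<close> this follows from
  \<open>[D\<^sub>0\<^sub>,\<^sub>m, e\<^sub>n] = -\<hbar> e\<^sub>m\<^sub>+\<^sub>n\<^sub>-\<^sub>1\<close>: applying \<open>\<tau>\<^sub>a\<close> and using that binomial shifts compose, both
  terms of \<open>z\<close> have the same commutator with \<open>\<tau>\<^sub>a(e\<^sub>n)\<close>, and since \<open>\<tau>\<^sub>a\<close> is unitriangular on
  the \<open>e\<^sub>n\<close> this passes to the \<open>e\<^sub>n\<close> themselves. Expanding the exponential, every \<open>h\<^sub>n\<close> is a
  polynomial in \<open>D\<^sub>0\<^sub>,\<^sub>1, \<dots>, D\<^sub>0\<^sub>,\<^sub>n\<^sub>+\<^sub>1\<close>, hence commutes with every \<open>D\<^sub>0\<^sub>,\<^sub>k\<close>; so the second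
  term of \<open>z\<close> commutes with all \<open>h\<^sub>n\<close>, and so does the first, by applying \<open>\<tau>\<^sub>a\<close> and using
  unitriangularity again. Finally \<open>h\<^sub>n\<^sub>+\<^sub>2\<close> is a nonzero multiple of \<open>D\<^sub>0\<^sub>,\<^sub>n\<^sub>+\<^sub>1\<close> plus a
  polynomial in \<open>D\<^sub>0\<^sub>,\<^sub>1, \<dots>, D\<^sub>0\<^sub>,\<^sub>n\<close>, so by induction \<open>z\<close> commutes with every \<open>D\<^sub>0\<^sub>,\<^sub>k\<close>.
\<close>

lemma poly_mapping_eq_sum_single:
  "(y :: 'a \<Rightarrow>\<^sub>0 'b::comm_monoid_add) =
     (\<Sum>w\<in>Poly_Mapping.keys y. Poly_Mapping.single w (Poly_Mapping.lookup y w))"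
  by (rule poly_mapping_eqI)
    (simp add: lookup_sum lookup_single when_def in_keys_iff if_distrib cong: if_cong)

lemma sc_mult: "sc a * sc b = sc (a * b)"
  by (simp add: sc_def mult_single)
lemma sc_add: "sc (a + b) = sc a + sc b"
  by (simp add: sc_def single_add)
lemma sc_uminus: "sc (- a) = - sc a"
  by (simp add: sc_def single_uminus)
lemma sc_one: "sc 1 = 1"
  by (simp add: sc_def)
lemma sc_zero: "sc 0 = 0"
  by (simp add: sc_def)

lemma sc_mult_single: "sc r * Poly_Mapping.single w s = Poly_Mapping.single w (r * s)"
  by (simp add: sc_def mult_single)
lemma single_mult_sc: "Poly_Mapping.single w s * sc r = Poly_Mapping.single w (s * r)"
  by (simp add: sc_def mult_single)

lemma sc_commute: "sc r * (y::FA) = y * sc r"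
proof -
  have "sc r * y = sc r * (\<Sum>w\<in>Poly_Mapping.keys y. Poly_Mapping.single w (Poly_Mapping.lookup y w))"
    by (subst poly_mapping_eq_sum_single[of y]) (rule refl)
  also have "\<dots> = (\<Sum>w\<in>Poly_Mapping.keys y. Poly_Mapping.single w (Poly_Mapping.lookup y w)) * sc r"
    by (simp add: sum_distrib_left sum_distrib_right sc_mult_single single_mult_sc mult.commute)
  also have "\<dots> = y * sc r"
    by (subst (2) poly_mapping_eq_sum_single[of y]) (rule refl)
  finally show ?thesis .
qed

lemma mult_sc_left_commute: "x * (sc s * y) = sc s * (x * y)"
  by (simp only: mult.assoc[symmetric] sc_commute[of s x, symmetric])

lemma lookup_sc_mult: "Poly_Mapping.lookup (sc r * (y::FA)) w = r * Poly_Mapping.lookup y w"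
proof -
  have "sc r * y = (\<Sum>v\<in>Poly_Mapping.keys y. Poly_Mapping.single v (r * Poly_Mapping.lookup y v))"
    by (subst poly_mapping_eq_sum_single[of y]) (simp add: sum_distrib_left sc_mult_single)
  then have "Poly_Mapping.lookup (sc r * y) w
      = (\<Sum>v\<in>Poly_Mapping.keys y. r * Poly_Mapping.lookup y v when v = w)"
    by (simp add: lookup_sum lookup_single)
  also have "\<dots> = r * Poly_Mapping.lookup y w"
    by (cases "w \<in> Poly_Mapping.keys y") (auto simp: when_def in_keys_iff)
  finally show ?thesis .
qed

lemma sc_mult_cancel_left:
  assumes "r \<noteq> 0" and "sc r * (x::FA) = sc r * y"
  shows "x = y"
proof (rule poly_mapping_eqI)
  fix w
  have "Poly_Mapping.lookup (sc r * x) w = Poly_Mapping.lookup (sc r * y) w"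
    using assms(2) by simp
  then show "Poly_Mapping.lookup x w = Poly_Mapping.lookup y w"
    using assms(1) by (simp add: lookup_sc_mult)
qed

lemma rconst_mult: "rconst a * rconst b = rconst (a * b)"
  by (simp add: rconst_def mult_single)
lemma rconst_add: "rconst (a + b) = rconst a + rconst b"
  by (simp add: rconst_def single_add)
lemma rconst_one: "rconst 1 = 1"
  by (simp add: rconst_def)
lemma rconst_zero: "rconst 0 = 0"
  by (simp add: rconst_def)

lemma cst_mult: "cst a * cst b = cst (a * b)"
  by (simp add: cst_def sc_mult rconst_mult)
lemma cst_one: "cst 1 = 1"
  by (simp add: cst_def rconst_one sc_one)
lemma cst_add: "cst (a + b) = cst a + cst b"
  by (simp add: cst_def rconst_add sc_add)
lemma cst_zero: "cst 0 = 0"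
  by (simp add: cst_def rconst_zero sc_zero)
lemma cst_sum: "cst (sum f A) = (\<Sum>i\<in>A. cst (f i))"
  by (induction A rule: infinite_finite_induct) (auto simp: cst_zero cst_add)

lemma rdiv_mult_cancel_left: "q \<noteq> 0 \<Longrightarrow> rdiv (q * r) q = r"
  unfolding rdiv_def by (rule the_equality) (auto simp: mult.commute)

lemma rdiv_dvd: "q \<noteq> 0 \<Longrightarrow> q dvd p \<Longrightarrow> p = q * rdiv p q"
  by (auto simp: rdiv_mult_cancel_left)

lemma rvar_neq0: "rvar i \<noteq> 0"
  by (metis lookup_single_eq lookup_zero one_neq_zero rvar_def)
lemma hb_neq0: "hb \<noteq> 0"
  by (simp add: hb_def rvar_neq0)
lemma tt_neq0: "tt \<noteq> 0"
  by (simp add: tt_def rvar_neq0)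
lemma hb_plus_tt_neq0: "hb + tt \<noteq> 0"
proof
  assume "hb + tt = 0"
  then have "Poly_Mapping.lookup (hb + tt) (Poly_Mapping.single 1 1) = 0" by simp
  moreover have "Poly_Mapping.single (2::nat) (1::nat) \<noteq> Poly_Mapping.single 1 1"
    by (metis lookup_single_eq lookup_single_not_eq one_neq_zero numeral_One numeral_eq_iff
        semiring_norm(85))
  ultimately show False
    by (simp add: hb_def tt_def rvar_def lookup_add lookup_single when_def)
qed

definition tt_hbt :: R where "tt_hbt = tt * (hb + tt)"

lemma tt_hbt_neq0: "tt_hbt \<noteq> 0"
  by (simp add: tt_hbt_def tt_neq0 hb_plus_tt_neq0)

section \<open>Congruence and commutation modulo the defining ideal\<close>

lemma two_sided_ideal_Yid: "two_sided_ideal Yid"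
  unfolding two_sided_ideal_def Yid_def by blast

lemma zero_in_Yid: "0 \<in> Yid"
  using two_sided_ideal_Yid by (simp add: two_sided_ideal_def)
lemma Yid_add: "x \<in> Yid \<Longrightarrow> y \<in> Yid \<Longrightarrow> x + y \<in> Yid"
  using two_sided_ideal_Yid by (simp add: two_sided_ideal_def)
lemma Yid_uminus: "x \<in> Yid \<Longrightarrow> - x \<in> Yid"
  using two_sided_ideal_Yid by (simp add: two_sided_ideal_def)
lemma Yid_mult_left: "x \<in> Yid \<Longrightarrow> a * x \<in> Yid"
  using two_sided_ideal_Yid by (simp add: two_sided_ideal_def)
lemma Yid_mult_right: "x \<in> Yid \<Longrightarrow> x * a \<in> Yid"
  using two_sided_ideal_Yid by (simp add: two_sided_ideal_def)
lemma Yid_diff: "x \<in> Yid \<Longrightarrow> y \<in> Yid \<Longrightarrow> x - y \<in> Yid"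
  using Yid_add[of x "- y"] Yid_uminus by simp
lemma rels_subset_Yid: "rels \<subseteq> Yid"
  unfolding Yid_def by blast

definition Ycong :: "FA \<Rightarrow> FA \<Rightarrow> bool" (infix "\<equiv>\<^sub>Y" 50) where
  "x \<equiv>\<^sub>Y y \<longleftrightarrow> x - y \<in> Yid"

lemma Ycong_refl: "x \<equiv>\<^sub>Y x"
  by (simp add: Ycong_def zero_in_Yid)
lemma Ycong_trans [trans]: "x \<equiv>\<^sub>Y y \<Longrightarrow> y \<equiv>\<^sub>Y z \<Longrightarrow> x \<equiv>\<^sub>Y z"
  unfolding Ycong_def by (drule (1) Yid_add) simp
lemma Ycong_add: "x \<equiv>\<^sub>Y y \<Longrightarrow> u \<equiv>\<^sub>Y v \<Longrightarrow> x + u \<equiv>\<^sub>Y y + v"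
  unfolding Ycong_def by (drule (1) Yid_add) (simp add: algebra_simps)
lemma Ycong_diff: "x \<equiv>\<^sub>Y y \<Longrightarrow> u \<equiv>\<^sub>Y v \<Longrightarrow> x - u \<equiv>\<^sub>Y y - v"
  unfolding Ycong_def by (drule (1) Yid_diff) (simp add: algebra_simps)
lemma Ycong_mult_left: "x \<equiv>\<^sub>Y y \<Longrightarrow> a * x \<equiv>\<^sub>Y a * y"
  unfolding Ycong_def by (drule Yid_mult_left[of _ a]) (simp add: right_diff_distrib)
lemma Ycong_mult_right: "x \<equiv>\<^sub>Y y \<Longrightarrow> x * a \<equiv>\<^sub>Y y * a"
  unfolding Ycong_def by (drule Yid_mult_right[of _ a]) (simp add: left_diff_distrib)
lemma Ycong_mult: "x \<equiv>\<^sub>Y y \<Longrightarrow> u \<equiv>\<^sub>Y v \<Longrightarrow> x * u \<equiv>\<^sub>Y y * v"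
  by (meson Ycong_mult_left Ycong_mult_right Ycong_trans)
lemma Ycong_sum: "(\<And>i. i \<in> A \<Longrightarrow> f i \<equiv>\<^sub>Y g i) \<Longrightarrow> sum f A \<equiv>\<^sub>Y sum g A"
  by (induction A rule: infinite_finite_induct) (auto simp: Ycong_refl Ycong_add)
lemma Ycong_comm: "x \<equiv>\<^sub>Y y \<Longrightarrow> u \<equiv>\<^sub>Y v \<Longrightarrow> comm x u \<equiv>\<^sub>Y comm y v"
  unfolding comm_def by (intro Ycong_diff Ycong_mult)

lemma comm_sum_left: "comm (sum f A) y = (\<Sum>i\<in>A. comm (f i) y)"
  by (simp add: comm_def sum_distrib_left sum_distrib_right sum_subtractf)
lemma comm_sum_right: "comm y (sum f A) = (\<Sum>i\<in>A. comm y (f i))"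
  by (simp add: comm_def sum_distrib_left sum_distrib_right sum_subtractf)
lemma comm_sc_left: "comm (sc r * x) y = sc r * comm x y"
  by (simp add: comm_def right_diff_distrib mult.assoc mult_sc_left_commute)
lemma comm_sc_right: "comm x (sc r * y) = sc r * comm x y"
  by (simp add: comm_def right_diff_distrib mult.assoc mult_sc_left_commute)
lemma comm_cst_left: "comm (cst c * x) y = cst c * comm x y"
  by (simp add: cst_def comm_sc_left)
lemma comm_cst_right: "comm x (cst c * y) = cst c * comm x y"
  by (simp add: cst_def comm_sc_right)
lemma comm_diff_left: "comm (x - y) z = comm x z - comm y z"
  by (simp add: comm_def left_diff_distrib right_diff_distrib)

definition Ycommute :: "FA \<Rightarrow> FA \<Rightarrow> bool" where
  "Ycommute z y \<longleftrightarrow> comm z y \<in> Yid"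

lemma Ycommute_iff_Ycong: "Ycommute z y \<longleftrightarrow> comm z y \<equiv>\<^sub>Y 0"
  by (simp add: Ycommute_def Ycong_def)

lemma Ycommute_add: "Ycommute z x \<Longrightarrow> Ycommute z y \<Longrightarrow> Ycommute z (x + y)"
  unfolding Ycommute_def comm_def by (drule (1) Yid_add) (simp add: algebra_simps)
lemma Ycommute_diff: "Ycommute z x \<Longrightarrow> Ycommute z y \<Longrightarrow> Ycommute z (x - y)"
  unfolding Ycommute_def comm_def by (drule (1) Yid_diff) (simp add: algebra_simps)
lemma Ycommute_mult:
  assumes "Ycommute z x" and "Ycommute z y"
  shows "Ycommute z (x * y)"
proof -
  have "(z * x - x * z) * y + x * (z * y - y * z) \<in> Yid"
    using assms unfolding Ycommute_def comm_def by (rule Yid_add[OF Yid_mult_right Yid_mult_left])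
  moreover have "(z * x - x * z) * y + x * (z * y - y * z) = z * (x * y) - (x * y) * z"
    by (simp add: left_diff_distrib right_diff_distrib mult.assoc)
  ultimately show ?thesis
    unfolding Ycommute_def comm_def by simp
qed
lemma Ycommute_sc: "Ycommute z (sc r)"
  unfolding Ycommute_def comm_def by (simp add: sc_commute zero_in_Yid)
lemma Ycommute_sc_mult: "Ycommute z y \<Longrightarrow> Ycommute z (sc r * y)"
  by (rule Ycommute_mult[OF Ycommute_sc])
lemma Ycommute_cst_mult: "Ycommute z y \<Longrightarrow> Ycommute z (cst c * y)"
  by (simp add: cst_def Ycommute_sc_mult)
lemma Ycommute_sum: "(\<And>i. i \<in> A \<Longrightarrow> Ycommute z (f i)) \<Longrightarrow> Ycommute z (sum f A)"
  by (induction A rule: infinite_finite_induct)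
    (auto simp: Ycommute_add intro: Ycommute_sc[of z 0, unfolded sc_zero])
lemma Ycommute_cong:
  assumes "Ycommute z y" and "y \<equiv>\<^sub>Y y'"
  shows "Ycommute z y'"
proof -
  have "comm z y - (z * (y - y') - (y - y') * z) \<in> Yid"
    using assms unfolding Ycommute_def Ycong_def comm_def
    by (intro Yid_diff[OF _ Yid_diff[OF Yid_mult_left Yid_mult_right]])
  then show ?thesis
    unfolding Ycommute_def comm_def by (simp add: algebra_simps)
qed
lemma Ycommute_sym: "Ycommute z y \<Longrightarrow> Ycommute y z"
  unfolding Ycommute_def comm_def by (drule Yid_uminus) simp
lemma Ycommute_diff_left: "Ycommute x z \<Longrightarrow> Ycommute y z \<Longrightarrow> Ycommute (x - y) z"
  using Ycommute_diff Ycommute_sym by blast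

lemma Ycentral_if_Ycommute_gn:
  assumes gen: "\<And>g. Ycommute z (gn g)"
  shows "Ycentral z"
proof -
  have word: "Ycommute z (Poly_Mapping.single w 1)" for w
  proof (cases w)
    case (Word gs)
    show ?thesis unfolding Word
    proof (induction gs)
      case Nil
      then show ?case using Ycommute_sc[of z 1] by (simp add: sc_def zero_word_def)
    next
      case (Cons g gs)
      have "Poly_Mapping.single (Word (g # gs)) (1::R) = gn g * Poly_Mapping.single (Word gs) 1"
        by (simp add: gn_def mult_single)
      then show ?case using Ycommute_mult[OF gen Cons] by simp
    qed
  qed
  have "Ycommute z y" for y
  proof -
    have "Ycommute z (\<Sum>w\<in>Poly_Mapping.keys y. sc (Poly_Mapping.lookup y w) * Poly_Mapping.single w 1)"
      by (intro Ycommute_sum Ycommute_sc_mult word)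
    then show ?thesis by (simp add: sc_mult_single flip: poly_mapping_eq_sum_single)
  qed
  then show ?thesis
    unfolding Ycentral_def Ycommute_def comm_def by blast
qed

lemma comm_D0_ee_Ycong:
  assumes "1 \<le> m"
  shows "comm (D0 m) (ee n) \<equiv>\<^sub>Y sc (- hb) * ee (m + n - 1)"
proof -
  have "comm (D0 m) (ee n) + sc hb * ee (m + n - 1) \<in> rels"
    unfolding rels_def using assms by blast
  then show ?thesis
    using rels_subset_Yid by (auto simp: Ycong_def sc_uminus)
qed

lemma comm_D0_ff_Ycong:
  assumes "1 \<le> m"
  shows "comm (D0 m) (ff n) \<equiv>\<^sub>Y sc hb * ff (m + n - 1)"
proof -
  have "comm (D0 m) (ff n) - sc hb * ff (m + n - 1) \<in> rels"
    unfolding rels_def using assms by blast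
  then show ?thesis
    using rels_subset_Yid by (auto simp: Ycong_def)
qed

lemma Ycommute_D0_D0:
  assumes "1 \<le> m" and "1 \<le> n"
  shows "Ycommute (D0 m) (D0 n)"
proof -
  have "comm (D0 m) (D0 n) \<in> rels"
    unfolding rels_def using assms by blast
  then show ?thesis
    using rels_subset_Yid by (auto simp: Ycommute_def)
qed

section \<open>The subalgebra generated by the \<open>D\<^sub>0\<^sub>,\<^sub>k\<close>\<close>

inductive_set D0_subalg :: "nat \<Rightarrow> FA set" for j where
  sc: "sc r \<in> D0_subalg j"
| D0: "1 \<le> i \<Longrightarrow> i \<le> j \<Longrightarrow> D0 i \<in> D0_subalg j"
| add: "x \<in> D0_subalg j \<Longrightarrow> y \<in> D0_subalg j \<Longrightarrow> x + y \<in> D0_subalg j"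
| mult: "x \<in> D0_subalg j \<Longrightarrow> y \<in> D0_subalg j \<Longrightarrow> x * y \<in> D0_subalg j"

lemma D0_subalg_zero: "0 \<in> D0_subalg j"
  using D0_subalg.sc[of 0 j] by (simp add: sc_zero)
lemma D0_subalg_one: "1 \<in> D0_subalg j"
  using D0_subalg.sc[of 1 j] by (simp add: sc_one)
lemma D0_subalg_sc_mult: "x \<in> D0_subalg j \<Longrightarrow> sc r * x \<in> D0_subalg j"
  by (rule D0_subalg.mult[OF D0_subalg.sc])
lemma D0_subalg_uminus: "x \<in> D0_subalg j \<Longrightarrow> - x \<in> D0_subalg j"
  using D0_subalg_sc_mult[of x j "-1"] by (simp add: sc_uminus sc_one)
lemma D0_subalg_diff: "x \<in> D0_subalg j \<Longrightarrow> y \<in> D0_subalg j \<Longrightarrow> x - y \<in> D0_subalg j"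
  using D0_subalg.add[OF _ D0_subalg_uminus] by simp
lemma D0_subalg_sum: "(\<And>i. i \<in> A \<Longrightarrow> f i \<in> D0_subalg j) \<Longrightarrow> sum f A \<in> D0_subalg j"
  by (induction A rule: infinite_finite_induct) (auto simp: D0_subalg_zero D0_subalg.add)

lemma Ycommute_D0_subalg:
  assumes "\<And>i. 1 \<le> i \<Longrightarrow> i \<le> j \<Longrightarrow> Ycommute z (D0 i)" and "x \<in> D0_subalg j"
  shows "Ycommute z x"
  using assms(2)
  by (induction x rule: D0_subalg.induct) (auto intro: Ycommute_sc Ycommute_add Ycommute_mult assms(1))

lemma D0_subalg_Ycommute:
  assumes "x \<in> D0_subalg j" and "y \<in> D0_subalg j'"
  shows "Ycommute x y"
proof -
  have "Ycommute (D0 i) y" if "1 \<le> i" for i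
    using Ycommute_D0_subalg[OF _ assms(2)] Ycommute_D0_D0 that by blast
  then have "Ycommute y x"
    using Ycommute_D0_subalg[OF _ assms(1)] Ycommute_sym by blast
  then show ?thesis by (rule Ycommute_sym)
qed

lemma D0_subalg_fps_nth_power:
  assumes "\<And>i. i \<le> M \<Longrightarrow> fps_nth f i \<in> D0_subalg J" and "N \<le> M"
  shows "fps_nth (f ^ j) N \<in> D0_subalg J"
  using assms(2)
proof (induction j arbitrary: N)
  case 0
  then show ?case by (simp add: D0_subalg_zero D0_subalg_one)
next
  case (Suc j)
  have "fps_nth (f ^ Suc j) N = (\<Sum>i=0..N. fps_nth f i * fps_nth (f ^ j) (N - i))"
    unfolding power_Suc fps_mult_nth ..
  also have "\<dots> \<in> D0_subalg J"
    using Suc by (intro D0_subalg_sum D0_subalg.mult assms(1)) auto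
  finally show ?case .
qed

lemma D0_subalg_fps_nth_power_lower:
  assumes "fps_nth f 0 = 0" and "\<And>i. i < N \<Longrightarrow> fps_nth f i \<in> D0_subalg J" and "2 \<le> j"
  shows "fps_nth (f ^ j) N \<in> D0_subalg J"
proof -
  obtain j' where j: "j = Suc j'" "1 \<le> j'"
    using assms(3) by (cases j) auto
  have f_pow_0: "fps_nth (f ^ j') 0 = 0"
    using j(2) assms(1) by (simp add: fps_nth_power_0 zero_power)
  have "fps_nth (f ^ j) N = (\<Sum>i=0..N. fps_nth f i * fps_nth (f ^ j') (N - i))"
    unfolding j power_Suc fps_mult_nth ..
  also have "\<dots> \<in> D0_subalg J"
  proof (intro D0_subalg_sum)
    fix i assume "i \<in> {0..N}"
    show "fps_nth f i * fps_nth (f ^ j') (N - i) \<in> D0_subalg J"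
    proof (cases "i = 0 \<or> i = N")
      case True
      then show ?thesis using assms(1) f_pow_0 by (auto simp: D0_subalg_zero)
    next
      case False
      then have "i < N" "N - i < N" using \<open>i \<in> {0..N}\<close> by auto
      then show ?thesis
        by (intro D0_subalg.mult assms(2) D0_subalg_fps_nth_power[of "N - 1"]) auto
    qed
  qed
  finally show ?thesis .
qed

section \<open>Binomial shifts\<close>

definition binom_shift :: "complex \<Rightarrow> (nat \<Rightarrow> FA) \<Rightarrow> nat \<Rightarrow> FA" where
  "binom_shift a G n = (\<Sum>k\<le>n. cst (of_nat (n choose k) * a ^ (n - k)) * G k)"

definition D0_shift :: "complex \<Rightarrow> nat \<Rightarrow> FA" where
  "D0_shift a m = (\<Sum>k=1..m. cst (of_nat ((m - 1) choose (k - 1)) * a ^ (m - k)) * D0 k)"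

lemma D0_shift_eq_binom_shift:
  assumes "1 \<le> m"
  shows "D0_shift a m = binom_shift a (\<lambda>k. D0 (k + 1)) (m - 1)"
proof -
  obtain M where m: "m = Suc M" using assms by (cases m) auto
  show ?thesis
    unfolding D0_shift_def binom_shift_def m
    by (simp only: One_nat_def sum.shift_bounds_cl_Suc_ivl atLeast0AtMost) simp
qed

lemma D0_shift_in_D0_subalg: "D0_shift a m \<in> D0_subalg m"
  unfolding D0_shift_def cst_def
  by (intro D0_subalg_sum D0_subalg_sc_mult D0_subalg.D0) auto

lemma binom_shift_binom_shift:
  "binom_shift a (\<lambda>k. binom_shift a (\<lambda>j. L (k + j)) n) M = binom_shift a L (M + n)"
proof -
  define g where "g k j = cst (of_nat ((M choose k) * (n choose j)) * a ^ (M + n - (k + j))) * L (k + j)"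
    for k j
  have "binom_shift a (\<lambda>k. binom_shift a (\<lambda>j. L (k + j)) n) M = (\<Sum>k\<le>M. \<Sum>j\<le>n. g k j)"
    unfolding binom_shift_def sum_distrib_left
  proof (intro sum.cong refl)
    fix k j assume "k \<in> {..M}" "j \<in> {..n}"
    then have "a ^ (M - k) * a ^ (n - j) = a ^ (M + n - (k + j))"
      by (simp add: power_add[symmetric])
    then have "of_nat (M choose k) * a ^ (M - k) * (of_nat (n choose j) * a ^ (n - j))
        = (of_nat ((M choose k) * (n choose j)) * a ^ (M + n - (k + j)) :: complex)"
      by (simp add: algebra_simps)
    then show "cst (of_nat (M choose k) * a ^ (M - k)) * (cst (of_nat (n choose j) * a ^ (n - j)) * L (k + j))
        = g k j"
      unfolding g_def by (simp only: mult.assoc[symmetric] cst_mult)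
  qed
  also have "\<dots> = (\<Sum>(k, j)\<in>{..M} \<times> {..n}. g k j)"
    by (simp add: sum.cartesian_product)
  also have "\<dots> = (\<Sum>(k, j)\<in>{(k, j). k + j \<le> M + n}. g k j)"
  proof (rule sum.mono_neutral_left)
    show "finite {(k, j). k + j \<le> M + n}"
      by (rule finite_subset[of _ "{..M + n} \<times> {..M + n}"]) auto
    have "g k j = 0" if "\<not> (k \<le> M \<and> j \<le> n)" for k j
    proof -
      have "(M choose k) * (n choose j) = 0"
        using that by auto
      then show ?thesis by (simp only: g_def of_nat_0 mult_zero_left cst_zero)
    qed
    then show "\<forall>i\<in>{(k, j). k + j \<le> M + n} - {..M} \<times> {..n}. (case i of (k, j) \<Rightarrow> g k j) = 0"
      by auto
  qed auto
  also have "\<dots> = (\<Sum>l\<le>M + n. \<Sum>k\<le>l. g k (l - k))"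
    by (rule sum.triangle_reindex_eq)
  also have "\<dots> = binom_shift a L (M + n)"
    unfolding binom_shift_def
  proof (rule sum.cong[OF refl])
    fix l
    have "(\<Sum>k\<le>l. g k (l - k))
        = cst (of_nat (\<Sum>k\<le>l. (M choose k) * (n choose (l - k))) * a ^ (M + n - l)) * L l"
      by (simp add: g_def cst_sum sum_distrib_right)
    then show "(\<Sum>k\<le>l. g k (l - k)) = cst (of_nat ((M + n) choose l) * a ^ (M + n - l)) * L l"
      by (simp add: vandermonde)
  qed
  finally show ?thesis .
qed

lemma comm_binom_shift_Ycong:
  assumes "\<And>k j. comm (D k) (G j) \<equiv>\<^sub>Y sc s * G (k + j)"
  shows "comm (binom_shift a D M) (binom_shift a G n) \<equiv>\<^sub>Y sc s * binom_shift a G (M + n)"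
proof -
  have "comm (binom_shift a D M) (binom_shift a G n)
      = binom_shift a (\<lambda>k. binom_shift a (\<lambda>j. comm (D k) (G j)) n) M"
    unfolding binom_shift_def comm_sum_left comm_cst_left
    unfolding comm_sum_right comm_cst_right sum_distrib_left ..
  also have "\<dots> \<equiv>\<^sub>Y binom_shift a (\<lambda>k. binom_shift a (\<lambda>j. sc s * G (k + j)) n) M"
    unfolding binom_shift_def by (intro Ycong_sum Ycong_mult_left assms)
  also have "\<dots> = sc s * binom_shift a (\<lambda>k. binom_shift a (\<lambda>j. G (k + j)) n) M"
    by (simp add: binom_shift_def sum_distrib_left mult_sc_left_commute)
  also have "\<dots> = sc s * binom_shift a G (M + n)"
    by (simp only: binom_shift_binom_shift)
  finally show ?thesis .
qed

lemma Ycommute_if_Ycong_binom_shift: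
  assumes "\<And>n. Ycommute z (H n)" and "\<And>n. H n \<equiv>\<^sub>Y binom_shift a G n"
  shows "Ycommute z (G n)"
proof (induction n rule: less_induct)
  case (less n)
  define lower where "lower = (\<Sum>k<n. cst (of_nat (n choose k) * a ^ (n - k)) * G k)"
  have "Ycommute z (binom_shift a G n)"
    using assms by (rule Ycommute_cong)
  moreover have "Ycommute z lower"
    unfolding lower_def by (intro Ycommute_sum Ycommute_cst_mult less) simp
  moreover have "binom_shift a G n = G n + lower"
    unfolding binom_shift_def lower_def by (simp add: lessThan_Suc_atMost[symmetric] cst_one)
  ultimately show ?case
    using Ycommute_diff[of z "binom_shift a G n" lower] by simp
qed

context
  fixes \<tau> :: "FA \<Rightarrow> FA"
  assumes tau: "Y_automorphism_lift \<tau>"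
begin

lemma tau_homomorphism:
  "(\<forall>x y. \<tau> (x + y) = \<tau> x + \<tau> y) \<and> (\<forall>x y. \<tau> (x * y) = \<tau> x * \<tau> y)
    \<and> (\<forall>r. \<tau> (sc r) = sc r) \<and> (\<forall>x\<in>Yid. \<tau> x \<in> Yid)"
  using tau unfolding Y_automorphism_lift_def by (elim conjE) (intro conjI)

lemma tau_add: "\<tau> (x + y) = \<tau> x + \<tau> y"
  using tau_homomorphism by blast
lemma tau_mult: "\<tau> (x * y) = \<tau> x * \<tau> y"
  using tau_homomorphism by blast
lemma tau_sc: "\<tau> (sc r) = sc r"
  using tau_homomorphism by blast
lemma tau_Yid: "x \<in> Yid \<Longrightarrow> \<tau> x \<in> Yid"
  using tau_homomorphism by blast

lemma tau_diff: "\<tau> (x - y) = \<tau> x - \<tau> y"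
proof -
  have "\<tau> (x - y) + \<tau> y = \<tau> x"
    by (simp flip: tau_add)
  then show ?thesis by (simp add: eq_diff_eq)
qed
lemma tau_comm: "\<tau> (comm x y) = comm (\<tau> x) (\<tau> y)"
  unfolding comm_def tau_diff tau_mult ..
lemma tau_Ycong: "x \<equiv>\<^sub>Y y \<Longrightarrow> \<tau> x \<equiv>\<^sub>Y \<tau> y"
  unfolding Ycong_def tau_diff[symmetric] by (rule tau_Yid)
lemma tau_sc_mult: "\<tau> (sc r * x) = sc r * \<tau> x"
  unfolding tau_mult tau_sc ..
lemma tau_Ycommute: "Ycommute x y \<Longrightarrow> Ycommute (\<tau> x) (\<tau> y)"
  unfolding Ycommute_def tau_comm[symmetric] by (rule tau_Yid)

end

lemma Ycommute_ladder:
  assumes tau: "Y_automorphism_lift \<tau>"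
    and ladder: "\<And>m n. 1 \<le> m \<Longrightarrow> comm (D0 m) (G n) \<equiv>\<^sub>Y sc s * G (m + n - 1)"
    and tau_G: "\<And>n. \<tau> (G n) \<equiv>\<^sub>Y binom_shift a G n"
    and m: "1 \<le> m"
  shows "Ycommute (\<tau> (D0 m) - D0_shift a m) (G n)"
proof (rule Ycommute_if_Ycong_binom_shift[OF _ tau_G])
  fix n
  have tau_D0: "comm (\<tau> (D0 m)) (\<tau> (G n)) \<equiv>\<^sub>Y sc s * binom_shift a G (m + n - 1)"
  proof -
    have "comm (\<tau> (D0 m)) (\<tau> (G n)) = \<tau> (comm (D0 m) (G n))"
      by (simp add: tau_comm[OF tau])
    also have "\<dots> \<equiv>\<^sub>Y \<tau> (sc s * G (m + n - 1))"
      by (rule tau_Ycong[OF tau ladder[OF m]])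
    also have "\<dots> = sc s * \<tau> (G (m + n - 1))"
      by (rule tau_sc_mult[OF tau])
    also have "\<dots> \<equiv>\<^sub>Y sc s * binom_shift a G (m + n - 1)"
      by (intro Ycong_mult_left tau_G)
    finally show ?thesis .
  qed
  have D0_shift: "comm (D0_shift a m) (\<tau> (G n)) \<equiv>\<^sub>Y sc s * binom_shift a G (m + n - 1)"
  proof -
    have "comm (D0_shift a m) (\<tau> (G n))
        \<equiv>\<^sub>Y comm (binom_shift a (\<lambda>k. D0 (k + 1)) (m - 1)) (binom_shift a G n)"
      unfolding D0_shift_eq_binom_shift[OF m] by (intro Ycong_comm Ycong_refl tau_G)
    also have "\<dots> \<equiv>\<^sub>Y sc s * binom_shift a G (m - 1 + n)"
    proof (rule comm_binom_shift_Ycong)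
      fix k j
      show "comm (D0 (k + 1)) (G j) \<equiv>\<^sub>Y sc s * G (k + j)"
        using ladder[of "k + 1" j] by simp
    qed
    finally show ?thesis
      using m by simp
  qed
  show "Ycommute (\<tau> (D0 m) - D0_shift a m) (\<tau> (G n))"
    using Ycong_diff[OF tau_D0 D0_shift] by (simp add: Ycommute_iff_Ycong comm_diff_left)
qed

section \<open>The elements \<open>h\<^sub>n\<close>\<close>

lemma odd_power_sum_dvd:
  fixes u v :: "'a::comm_ring_1"
  assumes "odd p"
  shows "u + v dvd u ^ p + v ^ p"
proof -
  have "u ^ p - (- v) ^ p = (u - (- v)) * (\<Sum>i<p. (- v) ^ (p - Suc i) * u ^ i)"
    by (rule power_diff_sumr2)
  then show ?thesis
    using assms by (simp add: power_minus_odd dvdI)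
qed

lemma odd_power_binomial_dvd:
  fixes u v :: "'a::comm_ring_1"
  assumes "odd j"
  shows "u * v * (u + v) dvd (u + v) ^ j - u ^ j - v ^ j"
proof -
  obtain i where "j = 2 * i + 1"
    using assms oddE by blast
  moreover have "u * v * (u + v) dvd (u + v) ^ (2 * i + 1) - u ^ (2 * i + 1) - v ^ (2 * i + 1)"
  proof (induction i)
    case 0
    then show ?case by simp
  next
    case (Suc i)
    define p where "p = 2 * i + 1"
    have "u * v * (u + v) dvd u * v * (u ^ (p - 1) * v + u * v ^ (p - 1))"
    proof (cases i)
      case 0
      then show ?thesis unfolding p_def by (simp add: algebra_simps)
    next
      case (Suc i')
      then have "u ^ (p - 1) * v + u * v ^ (p - 1) = u * v * (u ^ (2 * i' + 1) + v ^ (2 * i' + 1))"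
        unfolding p_def by (simp add: algebra_simps)
      then show ?thesis
        using odd_power_sum_dvd[of "2 * i' + 1" u v] by (simp add: mult_dvd_mono)
    qed
    moreover have "u * v * (u + v) dvd 2 * (u * v) * (u ^ p + v ^ p)"
      using odd_power_sum_dvd[of p u v] unfolding p_def by (simp add: mult_dvd_mono)
    moreover have "u * v * (u + v) dvd (u + v) ^ 2 * ((u + v) ^ p - u ^ p - v ^ p)"
      using Suc.IH unfolding p_def by simp
    moreover have "(u + v) ^ (2 * Suc i + 1) - u ^ (2 * Suc i + 1) - v ^ (2 * Suc i + 1)
        = (u + v) ^ 2 * ((u + v) ^ p - u ^ p - v ^ p) + 2 * (u * v) * (u ^ p + v ^ p)
          + u * v * (u ^ (p - 1) * v + u * v ^ (p - 1))"
    proof -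
      have p: "2 * Suc i + 1 = Suc (Suc p)"
        unfolding p_def by simp
      have "u ^ p = u * u ^ (p - 1)" "v ^ p = v * v ^ (p - 1)"
        unfolding p_def by simp_all
      then show ?thesis
        unfolding p by (simp add: algebra_simps power2_eq_square)
    qed
    ultimately show ?case
      by (metis dvd_add)
  qed
  ultimately show ?thesis by simp
qed

definition gcoef_const :: "nat \<Rightarrow> nat \<Rightarrow> R" where
  "gcoef_const n j = (if j = 0 then 0 else if n = 0 then rconst (1 / of_nat j)
     else rconst (of_nat ((n + j - 1) choose j) / of_nat n))"

lemma gcoef_eq: "gcoef n u j = gcoef_const n j * u ^ j"
  by (simp add: gcoef_def gcoef_const_def)

definition phi_sign_sum :: "nat \<Rightarrow> R" where
  "phi_sign_sum j =
     ((- hb) ^ j - hb ^ j) + ((hb + tt) ^ j - (- (hb + tt)) ^ j) + ((- tt) ^ j - tt ^ j)"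

lemma phic_eq: "n \<le> k \<Longrightarrow> phic n k = gcoef_const n (k - n) * phi_sign_sum (k - n)"
  by (simp add: phic_def gcoef_eq phi_sign_sum_def algebra_simps)
lemma phic_less: "k < n \<Longrightarrow> phic n k = 0"
  by (simp add: phic_def)

lemma phi_sign_sum_even:
  assumes "even j"
  shows "phi_sign_sum j = 0"
  unfolding phi_sign_sum_def power_minus_even[OF assms] by simp

lemma phi_sign_sum_odd:
  assumes "odd j"
  shows "phi_sign_sum j = 2 * ((hb + tt) ^ j - hb ^ j - tt ^ j)"
  unfolding phi_sign_sum_def power_minus_odd[OF assms] by (simp add: algebra_simps)

lemma hb_tt_hbt_dvd_phic: "hb * tt_hbt dvd phic n k"
proof (cases "n \<le> k \<and> odd (k - n)")
  case True
  then have le: "n \<le> k" and odd: "odd (k - n)" by simp_all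
  have "hb * tt_hbt dvd (hb + tt) ^ (k - n) - hb ^ (k - n) - tt ^ (k - n)"
    unfolding tt_hbt_def mult.assoc[symmetric] using odd by (rule odd_power_binomial_dvd)
  then have "hb * tt_hbt dvd phi_sign_sum (k - n)"
    unfolding phi_sign_sum_odd[OF odd] by (rule dvd_mult)
  then show ?thesis
    unfolding phic_eq[OF le] by (rule dvd_mult)
next
  case False
  then have "phic n k = 0"
    by (cases "n \<le> k") (simp_all add: phic_less phic_eq phi_sign_sum_even)
  then show ?thesis by simp
qed

lemma phic_small: "k < n + 3 \<Longrightarrow> phic n k = 0"
proof (cases "n \<le> k")
  case True
  assume "k < n + 3"
  then consider "k - n = 0" | "k - n = 1" | "k - n = 2"
    by linarith
  then show "phic n k = 0"
  proof cases
    case 1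
    then show ?thesis using True by (simp add: phic_eq gcoef_const_def)
  next
    case 2
    then show ?thesis using True by (simp add: phic_eq phi_sign_sum_def algebra_simps)
  next
    case 3
    then show ?thesis using True by (simp add: phic_eq phi_sign_sum_even)
  qed
qed (simp add: phic_less)

definition hh_lead_coeff :: "nat \<Rightarrow> complex" where
  "hh_lead_coeff n = 6 * (if n = 0 then 1 / 3 else of_nat ((n + 2) choose 3) / of_nat n)"

lemma hh_lead_coeff_neq0: "hh_lead_coeff n \<noteq> 0"
  by (simp add: hh_lead_coeff_def)

lemma phic_plus_3: "phic n (n + 3) = hb * tt_hbt * rconst (hh_lead_coeff n)"
proof -
  define c where "c = hh_lead_coeff n / 6"
  have "gcoef_const n 3 = rconst c"
    by (simp add: gcoef_const_def hh_lead_coeff_def c_def)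
  moreover have "phi_sign_sum 3 = 6 * (hb * tt * (hb + tt))"
    by (simp add: phi_sign_sum_odd power3_eq_cube algebra_simps)
  moreover have "rconst (hh_lead_coeff n) = 6 * rconst c"
    using rconst_mult[of 6 c] by (simp add: c_def rconst_def)
  ultimately show ?thesis
    by (simp add: phic_eq tt_hbt_def algebra_simps)
qed

definition phic_quot :: "nat \<Rightarrow> nat \<Rightarrow> R" where
  "phic_quot n k = rdiv (phic n k) (hb * tt_hbt)"

lemma phic_eq_quot: "phic n k = hb * tt_hbt * phic_quot n k"
  unfolding phic_quot_def
  by (rule rdiv_dvd) (simp_all add: hb_neq0 tt_hbt_neq0 hb_tt_hbt_dvd_phic)

lemma phic_quot_small: "k < n + 3 \<Longrightarrow> phic_quot n k = 0"
  using phic_eq_quot[of n k] phic_small[of k n] hb_neq0 tt_hbt_neq0 by simp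

lemma phic_quot_plus_3: "phic_quot n (n + 3) = rconst (hh_lead_coeff n)"
  using phic_eq_quot[of n "n + 3"] phic_plus_3[of n] hb_neq0 tt_hbt_neq0 by simp

lemma rdiv_phic_hb: "rdiv (phic n k) hb = tt_hbt * phic_quot n k"
  by (simp add: phic_eq_quot mult.assoc rdiv_mult_cancel_left hb_neq0)

definition Sred :: "FA fps" where
  "Sred = Abs_fps (\<lambda>k. - (\<Sum>n\<le>k. sc (phic_quot n k) * D0 (n + 1)))"

lemma fps_nth_Sser: "fps_nth Sser k = sc tt_hbt * fps_nth Sred k"
  unfolding Sser_def Sred_def fps_nth_Abs_fps rdiv_phic_hb sc_mult[symmetric] mult.assoc
    sum_distrib_left[symmetric] mult_minus_right ..

lemma fps_nth_Sser_power: "fps_nth (Sser ^ j) N = sc (tt_hbt ^ j) * fps_nth (Sred ^ j) N"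
proof (induction j arbitrary: N)
  case 0
  then show ?case by (simp add: sc_one)
next
  case (Suc j)
  have "fps_nth (Sser ^ Suc j) N = (\<Sum>i=0..N. fps_nth Sser i * fps_nth (Sser ^ j) (N - i))"
    unfolding power_Suc fps_mult_nth ..
  also have "\<dots> = (\<Sum>i=0..N. sc (tt_hbt ^ Suc j) * (fps_nth Sred i * fps_nth (Sred ^ j) (N - i)))"
  proof (rule sum.cong[OF refl])
    fix i
    have "fps_nth Sser i * fps_nth (Sser ^ j) (N - i)
        = sc tt_hbt * (fps_nth Sred i * (sc (tt_hbt ^ j) * fps_nth (Sred ^ j) (N - i)))"
      by (simp only: Suc.IH fps_nth_Sser mult.assoc)
    also have "\<dots> = sc tt_hbt * (sc (tt_hbt ^ j) * (fps_nth Sred i * fps_nth (Sred ^ j) (N - i)))"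
      by (simp only: mult_sc_left_commute[of "fps_nth Sred i"])
    also have "\<dots> = sc (tt_hbt ^ Suc j) * (fps_nth Sred i * fps_nth (Sred ^ j) (N - i))"
      by (simp only: mult.assoc[symmetric] sc_mult power_Suc)
    finally show "fps_nth Sser i * fps_nth (Sser ^ j) (N - i)
        = sc (tt_hbt ^ Suc j) * (fps_nth Sred i * fps_nth (Sred ^ j) (N - i))" .
  qed
  also have "\<dots> = sc (tt_hbt ^ Suc j) * fps_nth (Sred ^ Suc j) N"
    unfolding power_Suc[of Sred] fps_mult_nth sum_distrib_left ..
  finally show ?case .
qed

definition Ered :: "nat \<Rightarrow> FA" where
  "Ered N = (\<Sum>j\<in>{1..N}. sc (rconst (1 / fact j) * tt_hbt ^ (j - 1)) * fps_nth (Sred ^ j) N)"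

lemma Ec_eq_Ered:
  assumes "1 \<le> N"
  shows "Ec N = sc tt_hbt * Ered N"
proof -
  have "{..N} = insert 0 {1..N}" by auto
  then have "Ec N = sc (rconst (1 / fact 0)) * fps_nth (Sser ^ 0) N
      + (\<Sum>j\<in>{1..N}. sc (rconst (1 / fact j)) * fps_nth (Sser ^ j) N)"
    unfolding Ec_def by simp
  also have "sc (rconst (1 / fact 0)) * fps_nth (Sser ^ 0) N = 0"
    using assms by simp
  also have "(\<Sum>j\<in>{1..N}. sc (rconst (1 / fact j)) * fps_nth (Sser ^ j) N) = sc tt_hbt * Ered N"
    unfolding Ered_def sum_distrib_left
  proof (rule sum.cong[OF refl])
    fix j assume "j \<in> {1..N}"
    then have "tt_hbt ^ j = tt_hbt * tt_hbt ^ (j - 1)"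
      by (cases j) auto
    then show "sc (rconst (1 / fact j)) * fps_nth (Sser ^ j) N
        = sc tt_hbt * (sc (rconst (1 / fact j) * tt_hbt ^ (j - 1)) * fps_nth (Sred ^ j) N)"
      by (simp only: fps_nth_Sser_power mult.assoc[symmetric] sc_mult) (simp add: mult_ac)
  qed
  finally show ?thesis by simp
qed

lemma tt_hbt_dvd_Pc:
  assumes "1 \<le> i"
  shows "tt_hbt dvd Pc i"
proof -
  define s where "s = hb + (1 - om) * tt"
  have numc_1: "numc 1 = - s"
    by (simp add: numc_def s_def algebra_simps)
  have Pc_eq: "Pc i = (\<Sum>k\<in>{..min i 2}. numc k * s ^ (i - k))"
    unfolding Pc_def s_def[symmetric]
    by (rule sum.mono_neutral_right) (auto simp: numc_def)
  show ?thesis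
  proof (cases "i = 1")
    case True
    then have "Pc i = 0"
      using numc_1 unfolding Pc_eq by (simp add: numc_def)
    then show ?thesis by simp
  next
    case False
    with assms obtain i' where i: "i = Suc (Suc i')"
      by (cases i; cases "i - 1") auto
    have "{..min i 2} = {0, 1, 2}"
      unfolding i by auto
    then have "Pc i = s ^ i + numc 1 * s ^ (i - 1) + numc 2 * s ^ (i - 2)"
      unfolding Pc_eq by (simp add: numc_def)
    also have "\<dots> = numc 2 * s ^ i'"
      unfolding numc_1 i by (simp add: algebra_simps)
    also have "\<dots> = tt_hbt * (- (om * s ^ i'))"
      by (simp add: numc_def tt_hbt_def algebra_simps)
    finally show ?thesis by (rule dvdI)
  qed
qed

definition Pred :: "nat \<Rightarrow> R" where
  "Pred i = rdiv (Pc i) tt_hbt"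

lemma Pc_eq_Pred: "1 \<le> i \<Longrightarrow> Pc i = tt_hbt * Pred i"
  unfolding Pred_def by (rule rdiv_dvd[OF tt_hbt_neq0 tt_hbt_dvd_Pc])

lemma Pc_0: "Pc 0 = 1"
  by (simp add: Pc_def numc_def)

lemma RHSc_eq:
  assumes "1 \<le> N"
  shows "RHSc N = sc tt_hbt * (Ered N + (\<Sum>i\<in>{1..N}. sc (Pred i) * Ec (N - i)))"
proof -
  have "{..N} = insert 0 {1..N}" by auto
  then have "RHSc N = sc (Pc 0) * Ec N + (\<Sum>i\<in>{1..N}. sc (Pc i) * Ec (N - i))"
    unfolding RHSc_def by simp
  also have "(\<Sum>i\<in>{1..N}. sc (Pc i) * Ec (N - i)) = sc tt_hbt * (\<Sum>i\<in>{1..N}. sc (Pred i) * Ec (N - i))"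
    unfolding sum_distrib_left
    by (rule sum.cong) (auto simp: Pc_eq_Pred sc_mult[symmetric] mult.assoc)
  finally show ?thesis
    using assms by (simp add: Pc_0 sc_one Ec_eq_Ered distrib_left)
qed

lemma hh_eq: "hh n = - (Ered (n + 1) + (\<Sum>i\<in>{1..n+1}. sc (Pred i) * Ec (n + 1 - i)))"
  (is "_ = ?h")
proof -
  have "RHSc (n + 1) = sc tt_hbt * (Ered (n + 1) + (\<Sum>i\<in>{1..n+1}. sc (Pred i) * Ec (n + 1 - i)))"
    by (rule RHSc_eq) simp
  then have h: "sc tt_hbt * ?h = - RHSc (n + 1)"
    by (simp only: mult_minus_right)
  show ?thesis
    unfolding hh_def tt_hbt_def[symmetric]
  proof (rule the_equality)
    show "sc tt_hbt * ?h = - RHSc (n + 1)" by (rule h)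
  next
    fix y assume "sc tt_hbt * y = - RHSc (n + 1)"
    then have "sc tt_hbt * y = sc tt_hbt * ?h"
      by (simp only: h)
    then show "y = ?h"
      by (rule sc_mult_cancel_left[OF tt_hbt_neq0])
  qed
qed

lemma fps_nth_Sred_0: "fps_nth Sred 0 = 0"
  by (simp add: Sred_def phic_quot_small sc_zero)

lemma fps_nth_Sred_in_D0_subalg:
  assumes "i \<le> J + 2"
  shows "fps_nth Sred i \<in> D0_subalg J"
proof -
  have "sc (phic_quot n i) * D0 (n + 1) \<in> D0_subalg J" if "n \<le> i" for n
  proof (cases "i < n + 3")
    case True
    then show ?thesis by (simp add: phic_quot_small sc_zero D0_subalg_zero)
  next
    case False
    then show ?thesis
      using assms by (intro D0_subalg_sc_mult D0_subalg.D0) auto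
  qed
  then show ?thesis
    unfolding Sred_def fps_nth_Abs_fps by (intro D0_subalg_uminus D0_subalg_sum) auto
qed

lemma Ec_in_D0_subalg: "i \<le> J + 2 \<Longrightarrow> Ec i \<in> D0_subalg J"
  unfolding Ec_def
  by (intro D0_subalg_sum D0_subalg_sc_mult D0_subalg_fps_nth_power[of i])
    (auto intro!: D0_subalg_sc_mult fps_nth_Sred_in_D0_subalg simp: fps_nth_Sser)

lemma Ered_in_D0_subalg: "i \<le> J + 2 \<Longrightarrow> Ered i \<in> D0_subalg J"
  unfolding Ered_def
  by (intro D0_subalg_sum D0_subalg_sc_mult D0_subalg_fps_nth_power[of i])
    (auto intro: fps_nth_Sred_in_D0_subalg)

lemma hh_in_D0_subalg: "hh n \<in> D0_subalg (n + 1)"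
  unfolding hh_eq
  by (intro D0_subalg_uminus D0_subalg.add Ered_in_D0_subalg D0_subalg_sum D0_subalg_sc_mult
      Ec_in_D0_subalg) auto

text \<open>In the coefficient of \<open>x\<^sup>n\<^sup>+\<^sup>3\<close>, the generator \<open>D\<^sub>0\<^sub>,\<^sub>n\<^sub>+\<^sub>1\<close> only enters through the linear
  term of the exponential and the lowest term \<open>x\<^sup>n\<^sup>+\<^sup>3\<close> of \<open>\<phi>\<^sub>n\<close>.\<close>
lemma hh_minus_lead_in_D0_subalg:
  "hh (n + 2) - sc (rconst (hh_lead_coeff n)) * D0 (n + 1) \<in> D0_subalg n"
proof -
  define c where "c = sc (rconst (hh_lead_coeff n))"
  define R where "R = (\<Sum>i\<in>{..n + 3} - {n}. sc (phic_quot i (n + 3)) * D0 (i + 1))"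
  have R: "R \<in> D0_subalg n"
    unfolding R_def
  proof (intro D0_subalg_sum)
    fix i assume i: "i \<in> {..n + 3} - {n}"
    show "sc (phic_quot i (n + 3)) * D0 (i + 1) \<in> D0_subalg n"
    proof (cases "n < i")
      case True
      then show ?thesis by (simp add: phic_quot_small sc_zero D0_subalg_zero)
    next
      case False
      with i have "i + 1 \<le> n" by auto
      then show ?thesis by (intro D0_subalg_sc_mult D0_subalg.D0) auto
    qed
  qed
  have Sred: "fps_nth Sred (n + 3) = - (c * D0 (n + 1) + R)"
  proof -
    have "(\<Sum>i\<le>n + 3. sc (phic_quot i (n + 3)) * D0 (i + 1))
        = sc (phic_quot n (n + 3)) * D0 (n + 1) + R"
      unfolding R_def by (rule sum.remove) auto
    then show ?thesis
      unfolding Sred_def c_def by (simp add: phic_quot_plus_3)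
  qed
  define W2 where "W2 = (\<Sum>j\<in>{2..n + 3}. sc (rconst (1 / fact j) * tt_hbt ^ (j - 1))
    * fps_nth (Sred ^ j) (n + 3))"
  have W2: "W2 \<in> D0_subalg n"
    unfolding W2_def
    by (intro D0_subalg_sum D0_subalg_sc_mult D0_subalg_fps_nth_power_lower[OF fps_nth_Sred_0])
      (auto intro: fps_nth_Sred_in_D0_subalg)
  have Ered: "Ered (n + 3) = fps_nth Sred (n + 3) + W2"
  proof -
    have "{1..n + 3} = insert 1 {2..n + 3}" by auto
    then show ?thesis
      unfolding Ered_def W2_def by (simp add: rconst_one sc_one)
  qed
  define W3 where "W3 = (\<Sum>i\<in>{1..n + 3}. sc (Pred i) * Ec (n + 3 - i))"
  have W3: "W3 \<in> D0_subalg n"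
    unfolding W3_def by (intro D0_subalg_sum D0_subalg_sc_mult Ec_in_D0_subalg) auto
  have "n + 2 + 1 = n + 3" by simp
  then have "hh (n + 2) = - (Ered (n + 3) + W3)"
    by (simp only: hh_eq W3_def)
  also have "\<dots> = c * D0 (n + 1) + R - W2 - W3"
    unfolding Ered Sred by (simp add: algebra_simps)
  finally have "hh (n + 2) - c * D0 (n + 1) = R - W2 - W3"
    by simp
  with R W2 W3 show ?thesis
    unfolding c_def by (simp add: D0_subalg_diff)
qed

lemma Ycommute_D0_if_Ycommute_hh:
  assumes hh: "\<And>n. Ycommute z (hh n)"
  shows "Ycommute z (D0 (n + 1))"
proof (induction n rule: less_induct)
  case (less n)
  define c where "c = hh_lead_coeff n"
  have "Ycommute z (hh (n + 2) - sc (rconst c) * D0 (n + 1))"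
    unfolding c_def
  proof (rule Ycommute_D0_subalg[OF _ hh_minus_lead_in_D0_subalg])
    fix i assume "1 \<le> i" "i \<le> n"
    then show "Ycommute z (D0 i)"
      using less[of "i - 1"] by simp
  qed
  then have "Ycommute z (hh (n + 2) - (hh (n + 2) - sc (rconst c) * D0 (n + 1)))"
    by (rule Ycommute_diff[OF hh])
  then have "Ycommute z (sc (rconst c) * D0 (n + 1))"
    by simp
  then have "Ycommute z (sc (rconst (1 / c)) * (sc (rconst c) * D0 (n + 1)))"
    by (rule Ycommute_sc_mult)
  moreover have "sc (rconst (1 / c)) * (sc (rconst c) * D0 (n + 1)) = D0 (n + 1)"
    using hh_lead_coeff_neq0[of n]
    by (simp only: mult.assoc[symmetric] sc_mult rconst_mult) (simp add: c_def rconst_one sc_one)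
  ultimately show ?case by simp
qed

lemma Ycommute_hh:
  assumes tau: "Y_automorphism_lift \<tau>"
    and tau_hh: "\<And>n. \<tau> (hh n) \<equiv>\<^sub>Y binom_shift a hh n"
    and m: "1 \<le> m"
  shows "Ycommute (\<tau> (D0 m) - D0_shift a m) (hh n)"
proof (rule Ycommute_diff_left)
  have "Ycommute (\<tau> (D0 m)) (\<tau> (hh n))" for n
    using D0_subalg.D0[OF m order_refl] hh_in_D0_subalg
    by (intro tau_Ycommute[OF tau] D0_subalg_Ycommute)
  then show "Ycommute (\<tau> (D0 m)) (hh n)"
    by (rule Ycommute_if_Ycong_binom_shift[OF _ tau_hh])
  show "Ycommute (D0_shift a m) (hh n)"
    using D0_shift_in_D0_subalg hh_in_D0_subalg by (rule D0_subalg_Ycommute)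
qed

theorem lemma6p7:
  fixes a :: complex and \<tau> :: "FA \<Rightarrow> FA"
  assumes "Y_automorphism_lift \<tau>"
    and "\<And>n. \<tau> (ee n) - (\<Sum>k\<le>n. cst (of_nat (n choose k) * a ^ (n - k)) * ee k) \<in> Yid"
    and "\<And>n. \<tau> (ff n) - (\<Sum>k\<le>n. cst (of_nat (n choose k) * a ^ (n - k)) * ff k) \<in> Yid"
    and "\<And>n. \<tau> (hh n) - (\<Sum>k\<le>n. cst (of_nat (n choose k) * a ^ (n - k)) * hh k) \<in> Yid"
  shows "\<forall>m\<ge>1. Ycentral (\<tau> (D0 m) - (\<Sum>k=1..m. cst (of_nat ((m - 1) choose (k - 1)) * a ^ (m - k)) * D0 k))"
proof (intro allI impI)
  fix m :: nat assume m: "1 \<le> m"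
  have tau_ee: "\<tau> (ee n) \<equiv>\<^sub>Y binom_shift a ee n"
    and tau_ff: "\<tau> (ff n) \<equiv>\<^sub>Y binom_shift a ff n"
    and tau_hh: "\<tau> (hh n) \<equiv>\<^sub>Y binom_shift a hh n" for n
    using assms(2-4) by (simp_all add: Ycong_def binom_shift_def)
  define z where "z = \<tau> (D0 m) - D0_shift a m"
  have hh: "Ycommute z (hh n)" for n
    unfolding z_def using assms(1) tau_hh m by (rule Ycommute_hh)
  have "Ycommute z (gn g)" for g
  proof (cases g)
    case (DG i)
    then show ?thesis
      using Ycommute_D0_if_Ycommute_hh[OF hh, of i] by (simp add: D0_def)
  next
    case (EG n)
    then show ?thesis
      using Ycommute_ladder[OF assms(1) comm_D0_ee_Ycong tau_ee m] by (simp add: ee_def z_def)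
  next
    case (FG n)
    then show ?thesis
      using Ycommute_ladder[OF assms(1) comm_D0_ff_Ycong tau_ff m] by (simp add: ff_def z_def)
  qed
  then show "Ycentral (\<tau> (D0 m) - (\<Sum>k=1..m. cst (of_nat ((m - 1) choose (k - 1)) * a ^ (m - k)) * D0 k))"
    using Ycentral_if_Ycommute_gn unfolding z_def D0_shift_def by blast
qed

end
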